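(* Suppose that for every atom $z$ of $L(\mathbb{R}^3)$ there exists a finite set $\Omega(z)$ of atoms of $L(\mathbb{R}^3)$ with $e_1,e_2,e_3,b_{12},b_{13},b_{23},z\in\Omega(z)$ such that every frame function $f$ on $\Omega(z)$ satisfying $f(e_i)=0$ ($1\le i\le 3$), $f(b_{ij})=0$ ($1\le i<j\le 3$) and $|f(x)|\le 1$ for all $x\in\Omega(z)$ also satisfies $|f(z)|\le \tfrac12$. Then every bounded frame function $f$ on the set of all atoms of $L(\mathbb{R}^3)$ satisfying $f(e_i)=0$ for all $i$ and $f(b_{ij})=0$ for all $i<j$ is identically zero.
   Context: $L(\mathbb{R}^3)$ denotes the lattice of subspaces of $\mathbb{R}^3$ (with its standard inner product); its atoms are the one-dimensional subspaces (rays). A frame function on a set $\Gamma$ of atoms of $L(\mathbb{R}^3)$ is a real function $f$ on $\Gamma$ for which there is a constant $C$ such that $f(x)+f(x')+f(x'')=C$ for every triple $x,x',x''$ of pairwise orthogonal atoms in $\Gamma$. Let $\vec{e_1}=(1,0,0)$, $\vec{e_2}=(0,1,0)$, $\vec{e_3}=(0,0,1)$ and $\vec{b_{ij}}=\frac{1}{\sqrt{2}}(\vec{e_i}+\vec{e_j})$ for $1\le i<j\le 3$. Let $e_i$ and $b_{ij}$ denote the rays spanned by these vectors. *)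

theory Defs
  imports "HOL-Analysis.Analysis"
begin

definition is_atom :: "(real^3) set \<Rightarrow> bool" where
  "is_atom x \<longleftrightarrow> (\<exists>v. v \<noteq> 0 \<and> x = span {v})"

definition atoms :: "(real^3) set set" where
  "atoms = {x. is_atom x}"

definition orth :: "(real^3) set \<Rightarrow> (real^3) set \<Rightarrow> bool" where
  "orth x y \<longleftrightarrow> (\<forall>u\<in>x. \<forall>v\<in>y. inner u v = 0)"

definition frame_function :: "(real^3) set set \<Rightarrow> ((real^3) set \<Rightarrow> real) \<Rightarrow> bool" where
  "frame_function \<Gamma> f \<longleftrightarrow>
     (\<exists>C. \<forall>x\<in>\<Gamma>. \<forall>x'\<in>\<Gamma>. \<forall>x''\<in>\<Gamma>.
        orth x x' \<and> orth x x'' \<and> orth x' x'' \<longrightarrow> f x + f x' + f x'' = C)"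

definition evec :: "nat \<Rightarrow> real^3" where
  "evec i = (\<chi> k. if k = of_nat i then 1 else 0)"

lemma evec_vals: "evec 1 = vector [1,0,0]" "evec 2 = vector [0,1,0]" "evec 3 = vector [0,0,1]"
  unfolding evec_def vector_def by (auto simp: vec_eq_iff forall_3)

definition e_at :: "nat \<Rightarrow> (real^3) set" where
  "e_at i = span {evec i}"

definition b_at :: "nat \<Rightarrow> nat \<Rightarrow> (real^3) set" where
  "b_at i j = span {(1 / sqrt 2) *\<^sub>R (evec i + evec j)}"

definition special_atoms :: "(real^3) set set" where
  "special_atoms = {e_at 1, e_at 2, e_at 3, b_at 1 2, b_at 1 3, b_at 2 3}"

end

theory Submission
  imports Defs
begin

text \<open>If \<open>\<bar>f\<bar> \<le> M\<close> on all atoms, then \<open>f / M\<close> is admissible on each \<open>\<Omega>(z)\<close>, so \<open>\<bar>f z\<bar> \<le> M / 2\<close>.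
  Iterating, \<open>\<bar>f\<bar> \<le> M / 2\<^sup>n\<close> for every \<open>n\<close>, hence \<open>f = 0\<close>.\<close>

lemma frame_function_subset:
  assumes "frame_function \<Gamma> f" and "\<Omega> \<subseteq> \<Gamma>"
  shows "frame_function \<Omega> f"
  using assms unfolding frame_function_def by (meson subsetD)

lemma frame_function_scale:
  assumes "frame_function \<Gamma> f"
  shows "frame_function \<Gamma> (\<lambda>x. c * f x)"
proof -
  obtain C where "\<forall>x\<in>\<Gamma>. \<forall>x'\<in>\<Gamma>. \<forall>x''\<in>\<Gamma>.
      orth x x' \<and> orth x x'' \<and> orth x' x'' \<longrightarrow> f x + f x' + f x'' = C"
    using assms unfolding frame_function_def by blast
  then have "\<forall>x\<in>\<Gamma>. \<forall>x'\<in>\<Gamma>. \<forall>x''\<in>\<Gamma>.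
      orth x x' \<and> orth x x'' \<and> orth x' x'' \<longrightarrow> c * f x + c * f x' + c * f x'' = c * C"
    by (simp add: distrib_left[symmetric])
  then show ?thesis
    unfolding frame_function_def by blast
qed

lemma frame_function_bound_halves:
  assumes \<Omega>: "\<Omega> \<subseteq> \<Gamma>" "z \<in> \<Omega>"
    and halves: "\<forall>g. frame_function \<Omega> g \<and> (\<forall>y\<in>S. g y = 0) \<and> (\<forall>x\<in>\<Omega>. \<bar>g x\<bar> \<le> 1)
      \<longrightarrow> \<bar>g z\<bar> \<le> 1/2"
    and f: "frame_function \<Gamma> f" "\<forall>y\<in>S. f y = 0"
    and bound: "\<forall>x\<in>\<Gamma>. \<bar>f x\<bar> \<le> M"
  shows "\<bar>f z\<bar> \<le> M / 2"
proof (cases "M > 0")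
  case False
  then show ?thesis using bound \<Omega> by fastforce
next
  case True
  define g where "g = (\<lambda>x. f x / M)"
  have "frame_function \<Omega> g"
    using frame_function_scale[OF frame_function_subset[OF f(1) \<Omega>(1)], of "1 / M"]
    by (simp add: g_def)
  moreover have "\<forall>y\<in>S. g y = 0" using f(2) by (simp add: g_def)
  moreover have "\<forall>x\<in>\<Omega>. \<bar>g x\<bar> \<le> 1" using bound \<Omega>(1) True by (auto simp: g_def abs_divide)
  ultimately have "\<bar>g z\<bar> \<le> 1/2" using halves by blast
  then have "\<bar>f z\<bar> / M \<le> 1/2" using True by (simp add: g_def abs_divide)
  then show ?thesis using True by (simp add: divide_le_eq)
qed

lemma bound_halving_imp_zero:
  fixes f :: "'a \<Rightarrow> real"
  assumes bound: "\<forall>x\<in>A. \<bar>f x\<bar> \<le> M"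
    and halving: "\<And>M. \<forall>x\<in>A. \<bar>f x\<bar> \<le> M \<Longrightarrow> \<forall>x\<in>A. \<bar>f x\<bar> \<le> M / 2"
    and x: "x \<in> A"
  shows "f x = 0"
proof -
  have iterated: "\<forall>x\<in>A. \<bar>f x\<bar> \<le> M / 2 ^ n" for n
  proof (induction n)
    case 0
    then show ?case using bound by simp
  next
    case (Suc n)
    have "M / 2 ^ Suc n = M / 2 ^ n / 2" by simp
    then show ?case using halving[OF Suc] by (simp only:)
  qed
  have "\<bar>f x\<bar> \<le> 0"
  proof (rule LIMSEQ_le_const[OF LIMSEQ_divide_realpow_zero])
    show "\<exists>N. \<forall>n\<ge>N. \<bar>f x\<bar> \<le> M / 2 ^ n" using iterated x by auto
  qed simp
  then show ?thesis by simp
qed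

theorem mainTheorem2:
  assumes "\<forall>z\<in>atoms. \<exists>\<Omega>. finite \<Omega> \<and> \<Omega> \<subseteq> atoms \<and> special_atoms \<subseteq> \<Omega> \<and> z \<in> \<Omega> \<and>
     (\<forall>f. frame_function \<Omega> f \<and> (\<forall>y\<in>special_atoms. f y = 0) \<and> (\<forall>x\<in>\<Omega>. \<bar>f x\<bar> \<le> 1)
          \<longrightarrow> \<bar>f z\<bar> \<le> 1/2)"
  shows "\<forall>f. frame_function atoms f \<and> (\<exists>M. \<forall>x\<in>atoms. \<bar>f x\<bar> \<le> M) \<and>
             (\<forall>y\<in>special_atoms. f y = 0) \<longrightarrow> (\<forall>x\<in>atoms. f x = 0)"
proof (intro allI impI ballI)
  fix f x
  assume "frame_function atoms f \<and> (\<exists>M. \<forall>x\<in>atoms. \<bar>f x\<bar> \<le> M) \<and> (\<forall>y\<in>special_atoms. f y = 0)"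
  then obtain M where f: "frame_function atoms f" "\<forall>y\<in>special_atoms. f y = 0"
    and bound: "\<forall>x\<in>atoms. \<bar>f x\<bar> \<le> M"
    by blast
  have halving: "\<forall>z\<in>atoms. \<bar>f z\<bar> \<le> N / 2" if "\<forall>x\<in>atoms. \<bar>f x\<bar> \<le> N" for N
  proof
    fix z assume "z \<in> atoms"
    from bspec[OF assms this] obtain \<Omega> where "finite \<Omega> \<and> \<Omega> \<subseteq> atoms \<and> special_atoms \<subseteq> \<Omega> \<and> z \<in> \<Omega> \<and>
      (\<forall>g. frame_function \<Omega> g \<and> (\<forall>y\<in>special_atoms. g y = 0) \<and> (\<forall>x\<in>\<Omega>. \<bar>g x\<bar> \<le> 1)
          \<longrightarrow> \<bar>g z\<bar> \<le> 1/2)"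
      ..
    then show "\<bar>f z\<bar> \<le> N / 2"
      by (elim conjE) (rule frame_function_bound_halves[OF _ _ _ f that])
  qed
  show "x \<in> atoms \<Longrightarrow> f x = 0" by (rule bound_halving_imp_zero[OF bound halving])
qed

end
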